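(* For every $\varepsilon>0$ and every instance of the scheduling problem described in the context satisfying the slack assumption with parameter $\varepsilon$, let $J$ be the set of jobs admitted by the two-threshold algorithm and $F\subseteq J$ the set of admitted jobs that it finishes (completes by their deadlines). Then \[\sum_{j\in F}w_j\ \ge\ \frac12\sum_{j\in J}w_j.\]
   Context: Problem: $m$ unrelated machines; jobs arrive online; job $j$ is revealed at release date $r_j$ with processing times $p_{ij}\in\mathbb{R}_{>0}\cup\{\infty\}$ on machines $i$, weight $w_j>0$, deadline $d_j$. The density of $j$ on $i$ is $\rho_{ij}=w_j/p_{ij}$. Preemption is allowed; the schedule is non-migratory (a job admitted to machine $i$ is processed only there and completes after receiving $p_{ij}$ units of processing). Slack assumption with parameter $\varepsilon>0$: $d_j-r_j\ge(1+\varepsilon)p_{ij}$ whenever $p_{ij}<\infty$. Two-threshold algorithm: let $\varepsilon'=\min\{\varepsilon,1\}$. A job $j$ may be admitted to a machine $i$ at a time $a_j$; it is then never processed on any other machine. Job $j$ admitted to $i$ is active on $i$ at time $\tau\ge a_j$ if its remaining processing requirement on $i$ is positive and at most $a_j+(1+\varepsilon'/2)p_{ij}-\tau$; once a job stops being active without having completed, it is discarded and never processed again. Scheduling routine: at every time $\tau$, each machine $i$ processes the active job on $i$ of highest density $\rho_{ij}$. Admission routine: it is invoked at every time $\tau$ at which a job is released or a job completes. It loops over $i=1,\dots,m$; for machine $i$, let $j^\star$ be a job of maximum density $\rho_{ij^\star}$ among the jobs with $r_{j^\star}\le\tau$ and $d_{j^\star}-\tau\ge(1+\varepsilon'/2)p_{ij^\star}$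 that have not been admitted and not previously been considered. If no job is active on $i$ at $\tau$, $j^\star$ is admitted to $i$ with $a_{j^\star}=\tau$. Otherwise, let $j$ be the active job on $i$ of highest density; $j^\star$ is admitted to $i$ with $a_{j^\star}=\tau$ if one of the following holds: (1) $p_{ij^\star}\le\frac{\varepsilon'}{2}p_{ij}$ and $\rho_{ij^\star}\ge\frac{8}{\varepsilon'}\rho_{ij}$; (2) $\frac{\varepsilon'}{2}p_{ij}<p_{ij^\star}\le p_{ij}$ and $w_{j^\star}\ge 4w_j$; (3) $p_{ij^\star}>p_{ij}$ and $\rho_{ij^\star}\ge 4\rho_{ij}$. A newly admitted job starts processing immediately. A finished job is an admitted job that completes (it does so by time $a_j+(1+\varepsilon'/2)p_{ij}\le d_j$). *)

theory Defs
  imports "HOL-Analysis.Analysis"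
begin

text \<open>
Instance: machines are the natural numbers i < m (ordered, as the admission loop
runs over i = 1..m); jobs form a finite set Jobs of an arbitrary type 'j.
elig i j encodes p_ij < infinity; in that case p i j is the (positive, finite)
processing time. A run of the two-threshold algorithm is described by
  A       : the set of admitted jobs,
  mach j  : machine to which j is admitted,
  a j     : admission time of j,
  S i t   : the job processed on machine i at time t (None = idle),
  cons t i: the job j* considered on machine i by the admission routine invoked at t.
Ties (in densities) are resolved arbitrarily: the theorem quantifies over all runs.
\<close>

definition epsp :: "real \<Rightarrow> real" where
  "epsp \<epsilon> = min \<epsilon> 1"

definition dens :: "(nat \<Rightarrow> 'j \<Rightarrow> real) \<Rightarrow> ('j \<Rightarrow> real) \<Rightarrow> nat \<Rightarrow> 'j \<Rightarrow> real" where
  "dens p w i j = w j / p i j"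

definition processed :: "(nat \<Rightarrow> real \<Rightarrow> 'j option) \<Rightarrow> nat \<Rightarrow> 'j \<Rightarrow> real \<Rightarrow> real \<Rightarrow> real" where
  "processed S i j s t = measure lborel ({x. S i x = Some j} \<inter> {s..<t})"

definition remaining ::
  "(nat \<Rightarrow> 'j \<Rightarrow> real) \<Rightarrow> ('j \<Rightarrow> nat) \<Rightarrow> ('j \<Rightarrow> real) \<Rightarrow> (nat \<Rightarrow> real \<Rightarrow> 'j option)
    \<Rightarrow> 'j \<Rightarrow> real \<Rightarrow> real" where
  "remaining p mach a S j t = p (mach j) j - processed S (mach j) j (a j) t"

definition is_active ::
  "real \<Rightarrow> (nat \<Rightarrow> 'j \<Rightarrow> real) \<Rightarrow> 'j set \<Rightarrow> ('j \<Rightarrow> nat) \<Rightarrow> ('j \<Rightarrow> real)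
    \<Rightarrow> (nat \<Rightarrow> real \<Rightarrow> 'j option) \<Rightarrow> 'j \<Rightarrow> real \<Rightarrow> bool" where
  "is_active \<epsilon> p A mach a S j t \<longleftrightarrow>
     j \<in> A \<and> a j \<le> t \<and> remaining p mach a S j t > 0 \<and>
     remaining p mach a S j t \<le> a j + (1 + epsp \<epsilon> / 2) * p (mach j) j - t"

definition adm_cond ::
  "real \<Rightarrow> (nat \<Rightarrow> 'j \<Rightarrow> real) \<Rightarrow> ('j \<Rightarrow> real) \<Rightarrow> nat \<Rightarrow> 'j \<Rightarrow> 'j \<Rightarrow> bool" where
  "adm_cond \<epsilon> p w i js k \<longleftrightarrow>
     (p i js \<le> epsp \<epsilon> / 2 * p i k \<and> dens p w i js \<ge> 8 / epsp \<epsilon> * dens p w i k) \<or>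
     (epsp \<epsilon> / 2 * p i k < p i js \<and> p i js \<le> p i k \<and> w js \<ge> 4 * w k) \<or>
     (p i js > p i k \<and> dens p w i js \<ge> 4 * dens p w i k)"

definition event_times ::
  "'j set \<Rightarrow> ('j \<Rightarrow> real) \<Rightarrow> (nat \<Rightarrow> 'j \<Rightarrow> real) \<Rightarrow> 'j set \<Rightarrow> ('j \<Rightarrow> nat) \<Rightarrow> ('j \<Rightarrow> real)
    \<Rightarrow> (nat \<Rightarrow> real \<Rightarrow> 'j option) \<Rightarrow> real set" where
  "event_times Jobs r p A mach a S =
     {t. (\<exists>j\<in>Jobs. r j = t) \<or>
         (\<exists>j\<in>A. a j \<le> t \<and> remaining p mach a S j t = 0 \<and>
                 (\<forall>x. a j \<le> x \<and> x < t \<longrightarrow> remaining p mach a S j x > 0))}"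

definition candidates ::
  "real \<Rightarrow> 'j set \<Rightarrow> (nat \<Rightarrow> 'j \<Rightarrow> bool) \<Rightarrow> (nat \<Rightarrow> 'j \<Rightarrow> real) \<Rightarrow> ('j \<Rightarrow> real) \<Rightarrow> ('j \<Rightarrow> real)
    \<Rightarrow> 'j set \<Rightarrow> ('j \<Rightarrow> real) \<Rightarrow> (real \<Rightarrow> nat \<Rightarrow> 'j option) \<Rightarrow> real \<Rightarrow> nat \<Rightarrow> 'j set" where
  "candidates \<epsilon> Jobs elig p r d A a cons t i =
     {j\<in>Jobs. elig i j \<and> r j \<le> t \<and> d j - t \<ge> (1 + epsp \<epsilon> / 2) * p i j \<and>
              \<not> (j \<in> A \<and> a j < t) \<and> (\<forall>i'<i. cons t i' \<noteq> Some j)}"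

definition two_threshold_run ::
  "real \<Rightarrow> nat \<Rightarrow> 'j set \<Rightarrow> (nat \<Rightarrow> 'j \<Rightarrow> bool) \<Rightarrow> (nat \<Rightarrow> 'j \<Rightarrow> real) \<Rightarrow> ('j \<Rightarrow> real)
    \<Rightarrow> ('j \<Rightarrow> real) \<Rightarrow> ('j \<Rightarrow> real)
    \<Rightarrow> 'j set \<Rightarrow> ('j \<Rightarrow> nat) \<Rightarrow> ('j \<Rightarrow> real) \<Rightarrow> (nat \<Rightarrow> real \<Rightarrow> 'j option)
    \<Rightarrow> (real \<Rightarrow> nat \<Rightarrow> 'j option) \<Rightarrow> bool" where
  "two_threshold_run \<epsilon> m Jobs elig p w r d A mach a S cons \<longleftrightarrow>
     A \<subseteq> Jobs \<and>
     \<comment> \<open>schedule is measurable, so processed amounts are well defined\<close>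
     (\<forall>i j. {x. S i x = Some j} \<in> sets lborel) \<and>
     \<comment> \<open>scheduling routine: each machine processes an active job of highest density, idles otherwise\<close>
     (\<forall>i<m. \<forall>t.
        (S i t = None \<longleftrightarrow> (\<forall>j. \<not> (is_active \<epsilon> p A mach a S j t \<and> mach j = i))) \<and>
        (\<forall>j. S i t = Some j \<longrightarrow>
            is_active \<epsilon> p A mach a S j t \<and> mach j = i \<and>
            (\<forall>k. is_active \<epsilon> p A mach a S k t \<and> mach k = i \<longrightarrow> dens p w i k \<le> dens p w i j))) \<and>
     (\<forall>i t. i \<ge> m \<longrightarrow> S i t = None) \<and>
     \<comment> \<open>admissions only happen in the admission routine\<close>
     (\<forall>j\<in>A. mach j < m \<and> a j \<in> event_times Jobs r p A mach a S \<and> cons (a j) (mach j) = Some j) \<and>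
     \<comment> \<open>admission routine, invoked at every release / completion time t, loop over machines i<m\<close>
     (\<forall>t\<in>event_times Jobs r p A mach a S. \<forall>i<m.
        (cons t i = None \<longleftrightarrow> candidates \<epsilon> Jobs elig p r d A a cons t i = {}) \<and>
        (\<forall>js. cons t i = Some js \<longrightarrow>
           js \<in> candidates \<epsilon> Jobs elig p r d A a cons t i \<and>
           (\<forall>k\<in>candidates \<epsilon> Jobs elig p r d A a cons t i. dens p w i k \<le> dens p w i js) \<and>
           (let Act = {k. is_active \<epsilon> p A mach a S k t \<and> mach k = i \<and> a k < t} in
              if Act = {} then (js \<in> A \<and> mach js = i \<and> a js = t)
              else (\<exists>k\<in>Act. (\<forall>k'\<in>Act. dens p w i k' \<le> dens p w i k) \<and>
                      ((js \<in> A \<and> mach js = i \<and> a js = t) \<longleftrightarrow> adm_cond \<epsilon> p w i js k)))))"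

definition finished_jobs ::
  "(nat \<Rightarrow> 'j \<Rightarrow> real) \<Rightarrow> 'j set \<Rightarrow> ('j \<Rightarrow> nat) \<Rightarrow> ('j \<Rightarrow> real) \<Rightarrow> (nat \<Rightarrow> real \<Rightarrow> 'j option) \<Rightarrow> 'j set" where
  "finished_jobs p A mach a S = {j\<in>A. \<exists>t\<ge>a j. remaining p mach a S j t = 0}"

end

(* Call j the parent of k if j is the densest job active on the machine of k when k is admitted.
   Every admission beats that job in density by a factor 4, so among the jobs simultaneously
   active on a machine the later admitted ones are denser.  Hence the parent relation is a
   forest, and whenever an active job is not processed, one of its descendants is.  A job j that
   is never finished is active until it has waited \<delta> p_j = \<epsilon>'/2 p_j time units without
   being processed, so its descendants receive at least \<delta> p_j units of processing.

   Count finished jobs positively and unfinished ones negatively.  Induction over the forest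
   shows that the subtree of j has signed weight at least \<rho>_j (p_j + Z_j), where Z_j is the
   processing received by the proper descendants of j: if j is unfinished, the admission rule
   makes some child four times heavier than j or all children 8/\<epsilon>' times denser, and either
   way the children pay for 2 w_j.  Summing over the roots, the finished weight is at least the
   unfinished weight.
*)

theory Submission
  imports Defs
begin

section \<open>Processing amounts\<close>

lemma processed_nonneg: "processed S i j s t \<ge> 0"
  by (simp add: processed_def)

lemma processed_empty: "t \<le> s \<Longrightarrow> processed S i j s t = 0"
  by (simp add: processed_def)

lemma processed_eq_0:
  assumes "\<And>x. s \<le> x \<Longrightarrow> x < t \<Longrightarrow> S i x \<noteq> Some j"
  shows "processed S i j s t = 0"
proof -
  have "{x. S i x = Some j} \<inter> {s..<t} = {}" using assms by auto
  then show ?thesis by (simp add: processed_def)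
qed

lemma fmeasurable_Ico: "{s..<t::real} \<in> fmeasurable lborel"
  by (cases "s \<le> t") (auto simp: fmeasurable_def)

locale measurable_schedule =
  fixes S :: "nat \<Rightarrow> real \<Rightarrow> 'j option"
  assumes measurable_slots: "\<And>i j. {x. S i x = Some j} \<in> sets lborel"
begin

lemma fmeasurable_slots: "{x. S i x = Some j} \<inter> {s..<t} \<in> fmeasurable lborel"
  using fmeasurable_Int_fmeasurable[OF fmeasurable_Ico measurable_slots] by (simp add: Int_commute)

lemma processed_le:
  assumes "s \<le> t"
  shows "processed S i j s t \<le> t - s"
proof -
  have "processed S i j s t \<le> measure lborel {s..<t}"
    unfolding processed_def
    by (rule measure_mono_fmeasurable) (use measurable_slots fmeasurable_Ico in auto)
  then show ?thesis using assms by simp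
qed

lemma processed_split:
  assumes "s \<le> u" "u \<le> t"
  shows "processed S i j s t = processed S i j s u + processed S i j u t"
proof -
  let ?X = "{x. S i x = Some j}"
  have "?X \<inter> {s..<t} = (?X \<inter> {s..<u}) \<union> (?X \<inter> {u..<t})" using assms by auto
  moreover have "measure lborel ((?X \<inter> {s..<u}) \<union> (?X \<inter> {u..<t})) =
      measure lborel (?X \<inter> {s..<u}) + measure lborel (?X \<inter> {u..<t})"
    by (rule measure_Union) (use fmeasurable_slots in \<open>auto simp: fmeasurable_def less_top\<close>)
  ultimately show ?thesis by (simp add: processed_def)
qed

lemma processed_mono:
  assumes "u \<le> t"
  shows "processed S i j s u \<le> processed S i j s t"
proof (cases "s \<le> u")
  case True
  then show ?thesis using processed_split[OF True assms] processed_nonneg[of S i j u t] by simp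
next
  case False
  then show ?thesis by (simp add: processed_empty processed_nonneg)
qed

lemma processed_increment_le:
  assumes "s \<le> u" "u \<le> t"
  shows "processed S i j s t - processed S i j s u \<le> t - u"
  using processed_split[OF assms] processed_le[OF assms(2)] by simp

lemma continuous_on_processed: "continuous_on {s..} (processed S i j s)"
proof -
  have ordered: "dist (processed S i j s x) (processed S i j s y) \<le> dist x y"
    if "s \<le> x" "x \<le> y" for x y
    using that processed_increment_le[of s x y] processed_mono[of x y]
    by (simp add: dist_real_def)
  have "1-lipschitz_on {s..} (processed S i j s)"
  proof (rule lipschitz_onI)
    fix x y assume "x \<in> {s..}" "y \<in> {s..}"
    then show "dist (processed S i j s x) (processed S i j s y) \<le> 1 * dist x y"
      using ordered[of x y] ordered[of y x] by (cases "x \<le> y") (simp_all add: dist_commute)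
  qed simp
  then show ?thesis by (rule lipschitz_on_continuous_on)
qed

end

lemma length_le_measure_cover:
  assumes "s \<le> t" "X \<in> fmeasurable lborel" "finite I" "\<And>i. i \<in> I \<Longrightarrow> Y i \<in> fmeasurable lborel"
    and cover: "{s..<t} \<subseteq> X \<union> (\<Union>i\<in>I. Y i)"
  shows "t - s \<le> measure lborel X + (\<Sum>i\<in>I. measure lborel (Y i))"
proof -
  have U: "(\<Union>i\<in>I. Y i) \<in> fmeasurable lborel"
    using assms(3,4) by (rule fmeasurable.finite_UN)
  have "t - s = measure lborel {s..<t}" using assms(1) by simp
  also have "\<dots> \<le> measure lborel (X \<union> (\<Union>i\<in>I. Y i))"
    by (rule measure_mono_fmeasurable[OF cover]) (use assms(2) U in auto)
  also have "\<dots> \<le> measure lborel X + measure lborel (\<Union>i\<in>I. Y i)"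
    by (rule measure_Un_le) (use assms(2) U in auto)
  also have "measure lborel (\<Union>i\<in>I. Y i) \<le> (\<Sum>i\<in>I. measure lborel (Y i))"
    using assms(3) fmeasurableD[OF assms(4)] by (intro measure_UNION_le) auto
  finally show ?thesis by simp
qed

section \<open>Forests given by a ranked parent relation\<close>

lemma wf_finite_rank:
  fixes rank :: "'a \<Rightarrow> 'b::linorder"
  assumes "finite V"
  shows "wf {(x, y). x \<in> V \<and> y \<in> V \<and> rank x < rank y}" (is "wf ?r")
    and "wf {(y, x). x \<in> V \<and> y \<in> V \<and> rank x < rank y}"
proof -
  have "finite ?r" by (rule finite_subset[of _ "V \<times> V"]) (use assms in auto)
  moreover have "acyclic ?r"
  proof -
    have "trans ?r" by (auto simp: trans_def)
    then show ?thesis by (simp add: acyclic_def)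
  qed
  ultimately have "wf ?r" "wf (?r\<inverse>)"
    by (simp_all add: finite_acyclic_wf finite_acyclic_wf_converse)
  then show "wf ?r" "wf {(y, x). x \<in> V \<and> y \<in> V \<and> rank x < rank y}"
    by (simp_all add: converse_unfold)
qed

locale ranked_forest =
  fixes R :: "'a \<Rightarrow> 'a \<Rightarrow> bool" and V :: "'a set" and rank :: "'a \<Rightarrow> 'b::linorder"
  assumes finite_nodes: "finite V"
    and edge_nodes: "R x y \<Longrightarrow> x \<in> V \<and> y \<in> V"
    and rank_less: "R x y \<Longrightarrow> rank x < rank y"
    and parent_unique: "R x z \<Longrightarrow> R y z \<Longrightarrow> x = y"
begin

definition children :: "'a \<Rightarrow> 'a set" where "children j = {c. R j c}"
definition subtree :: "'a \<Rightarrow> 'a set" where "subtree j = {k. R\<^sup>*\<^sup>* j k}"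
definition descendants :: "'a \<Rightarrow> 'a set" where "descendants j = {k. R\<^sup>+\<^sup>+ j k}"
definition roots :: "'a set" where "roots = {q \<in> V. \<forall>j. \<not> R j q}"

lemma children_induct [case_names children]:
  assumes "\<And>j. (\<And>c. R j c \<Longrightarrow> P c) \<Longrightarrow> P j"
  shows "P j"
proof (induction j rule: wf_induct_rule[OF wf_finite_rank(2)[OF finite_nodes, of rank]])
  case (1 j)
  then show ?case using assms edge_nodes rank_less by blast
qed

lemma tranclp_rank_less: "R\<^sup>+\<^sup>+ x y \<Longrightarrow> x \<in> V \<and> y \<in> V \<and> rank x < rank y"
  by (induction rule: tranclp_induct) (auto dest: edge_nodes rank_less)

lemma descendants_subset: "descendants j \<subseteq> V"
  unfolding descendants_def using tranclp_rank_less by blast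

lemma finite_children: "finite (children j)"
  by (rule finite_subset[OF _ finite_nodes]) (auto simp: children_def dest: edge_nodes)

lemma finite_descendants: "finite (descendants j)"
  using descendants_subset finite_nodes by (rule finite_subset)

lemma subtree_eq: "subtree j = insert j (descendants j)"
  unfolding subtree_def descendants_def by (auto dest: rtranclpD tranclp_into_rtranclp)

lemma not_in_descendants: "j \<notin> descendants j"
  unfolding descendants_def using tranclp_rank_less by blast

lemma finite_subtree: "finite (subtree j)"
  by (simp add: subtree_eq finite_descendants)

lemma rtranclp_comparable:
  assumes "R\<^sup>*\<^sup>* v x" "R\<^sup>*\<^sup>* u x"
  shows "R\<^sup>*\<^sup>* u v \<or> R\<^sup>*\<^sup>* v u"
  using assms
proof (induction arbitrary: u rule: rtranclp_induct)
  case base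
  then show ?case by simp
next
  case (step y z)
  from \<open>R\<^sup>*\<^sup>* u z\<close> show ?case
  proof (cases rule: rtranclp.cases)
    case rtrancl_refl
    then show ?thesis using step.hyps by (metis rtranclp.rtrancl_into_rtrancl)
  next
    case (rtrancl_into_rtrancl y')
    then have "y' = y" using parent_unique step.hyps(2) by blast
    then show ?thesis using rtrancl_into_rtrancl step.IH by blast
  qed
qed

lemma subtree_disjoint:
  assumes "\<not> R\<^sup>*\<^sup>* u v" "\<not> R\<^sup>*\<^sup>* v u"
  shows "subtree u \<inter> subtree v = {}"
  using rtranclp_comparable assms unfolding subtree_def by blast

lemma children_incomparable:
  assumes "R j c" "R j c'" "c \<noteq> c'"
  shows "\<not> R\<^sup>*\<^sup>* c c'"
proof
  assume "R\<^sup>*\<^sup>* c c'"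
  then obtain y where "R\<^sup>*\<^sup>* c y" "R y c'"
    using assms(3) by (cases rule: rtranclp.cases) auto
  moreover have "y = j" using parent_unique \<open>R y c'\<close> assms(2) by blast
  ultimately have "c = j \<or> R\<^sup>+\<^sup>+ c j" by (metis rtranclpD)
  then have "rank c \<le> rank j" using tranclp_rank_less by fastforce
  then show False using rank_less[OF assms(1)] by simp
qed

lemma roots_incomparable:
  assumes "q \<in> roots" "q' \<in> roots" "q \<noteq> q'"
  shows "\<not> R\<^sup>*\<^sup>* q q'"
proof
  assume "R\<^sup>*\<^sup>* q q'"
  then obtain y where "R y q'" using assms(3) by (cases rule: rtranclp.cases) auto
  then show False using assms(2) unfolding roots_def by blast
qed

lemma descendants_eq_UN: "descendants j = (\<Union>c\<in>children j. subtree c)"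
  unfolding descendants_def children_def subtree_def
  by (auto simp: tranclp_rtranclp_tranclp dest: tranclpD)

lemma sum_descendants: "(\<Sum>k\<in>descendants j. g k) = (\<Sum>c\<in>children j. \<Sum>k\<in>subtree c. g k)"
  unfolding descendants_eq_UN
  by (rule sum.UNION_disjoint)
    (use finite_children finite_subtree children_incomparable subtree_disjoint
      in \<open>auto simp: children_def\<close>)

lemma sum_subtree: "(\<Sum>k\<in>subtree j. g k) = g j + (\<Sum>k\<in>descendants j. g k)"
  by (simp add: subtree_eq finite_descendants not_in_descendants)

lemma root_reaches: "k \<in> V \<Longrightarrow> \<exists>q\<in>roots. R\<^sup>*\<^sup>* q k"
proof (induction k rule: wf_induct_rule[OF wf_finite_rank(1)[OF finite_nodes, of rank]])
  case (1 k)
  show ?case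
  proof (cases "k \<in> roots")
    case False
    then obtain j where "R j k" using "1.prems" by (auto simp: roots_def)
    then have "j \<in> V" "rank j < rank k" using edge_nodes rank_less by auto
    then obtain q where "q \<in> roots" "R\<^sup>*\<^sup>* q j" using "1.IH" "1.prems" by blast
    then show ?thesis using \<open>R j k\<close> by (meson rtranclp.rtrancl_into_rtrancl)
  qed blast
qed

lemma subtree_subset: "q \<in> V \<Longrightarrow> subtree q \<subseteq> V"
  using descendants_subset by (auto simp: subtree_eq)

lemma sum_nodes_roots: "(\<Sum>k\<in>V. g k) = (\<Sum>q\<in>roots. \<Sum>k\<in>subtree q. g k)"
proof -
  have "V = (\<Union>q\<in>roots. subtree q)"
  proof
    show "V \<subseteq> (\<Union>q\<in>roots. subtree q)"
      using root_reaches unfolding subtree_def by blast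
    show "(\<Union>q\<in>roots. subtree q) \<subseteq> V"
      using subtree_subset unfolding roots_def by blast
  qed
  also have "(\<Sum>k\<in>(\<Union>q\<in>roots. subtree q). g k) = (\<Sum>q\<in>roots. \<Sum>k\<in>subtree q. g k)"
  proof (rule sum.UNION_disjoint)
    show "finite roots" using finite_nodes unfolding roots_def by simp
  qed (use finite_subtree subtree_disjoint roots_incomparable in blast)+
  finally show ?thesis .
qed

end

section \<open>Runs of the two-threshold algorithm\<close>

lemma adm_cond_density_ge:
  assumes adm: "adm_cond \<epsilon> p w i y k"
    and "\<epsilon> > 0" "p i y > 0" "p i k > 0" "w k > 0"
  shows "4 * dens p w i k \<le> dens p w i y"
proof -
  have "4 \<le> 8 / epsp \<epsilon>" using \<open>\<epsilon> > 0\<close> by (simp add: epsp_def field_simps)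
  moreover have "dens p w i k > 0" using assms by (simp add: dens_def)
  ultimately have dense: "4 * dens p w i k \<le> 8 / epsp \<epsilon> * dens p w i k"
    by (intro mult_right_mono) auto
  consider "8 / epsp \<epsilon> * dens p w i k \<le> dens p w i y"
    | "p i y \<le> p i k" "4 * w k \<le> w y"
    | "4 * dens p w i k \<le> dens p w i y"
    using adm unfolding adm_cond_def by auto
  then show ?thesis
  proof cases
    case 2
    have "4 * w k / p i k \<le> 4 * w k / p i y"
      using 2 assms by (intro divide_left_mono) auto
    also have "\<dots> \<le> w y / p i y" using 2 assms by (intro divide_right_mono) auto
    finally show ?thesis by (simp add: dens_def)
  qed (use dense in linarith)+
qed

lemma adm_cond_dense_or_heavy:
  assumes adm: "adm_cond \<epsilon> p w i y k"
    and "\<epsilon> > 0" "p i y > 0" "p i k > 0" "w k > 0"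
  shows "8 / epsp \<epsilon> * dens p w i k \<le> dens p w i y \<or> 4 * w k \<le> w y"
proof -
  consider "8 / epsp \<epsilon> * dens p w i k \<le> dens p w i y" | "4 * w k \<le> w y" | "p i k < p i y"
    using adm unfolding adm_cond_def by auto
  then show ?thesis
  proof cases
    case 3
    have ge: "4 * dens p w i k \<le> dens p w i y" by (rule adm_cond_density_ge[OF assms])
    moreover have "dens p w i k > 0" using assms by (simp add: dens_def)
    ultimately have "4 * dens p w i k * p i k \<le> dens p w i y * p i y"
      using 3 \<open>p i k > 0\<close> by (intro mult_mono) auto
    moreover have "4 * w k = 4 * dens p w i k * p i k" using assms by (simp add: dens_def)
    ultimately have "4 * w k \<le> dens p w i y * p i y" by simp
    also have "\<dots> = w y" using assms by (simp add: dens_def)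
    finally show ?thesis ..
  qed simp_all
qed

locale two_threshold =
  fixes \<epsilon> :: real and m :: nat and Jobs :: "'j set"
    and elig :: "nat \<Rightarrow> 'j \<Rightarrow> bool" and p :: "nat \<Rightarrow> 'j \<Rightarrow> real"
    and w r d :: "'j \<Rightarrow> real"
    and A :: "'j set" and mach :: "'j \<Rightarrow> nat" and a :: "'j \<Rightarrow> real"
    and S :: "nat \<Rightarrow> real \<Rightarrow> 'j option" and cons :: "real \<Rightarrow> nat \<Rightarrow> 'j option"
  assumes eps_pos: "\<epsilon> > 0"
    and finite_jobs: "finite Jobs"
    and weight_pos: "\<And>j. j \<in> Jobs \<Longrightarrow> w j > 0"
    and processing_time_pos: "\<And>i j. i < m \<Longrightarrow> j \<in> Jobs \<Longrightarrow> elig i j \<Longrightarrow> p i j > 0"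
    and run: "two_threshold_run \<epsilon> m Jobs elig p w r d A mach a S cons"
begin

abbreviation "active j t \<equiv> is_active \<epsilon> p A mach a S j t"
abbreviation "work j t \<equiv> processed S (mach j) j (a j) t"
abbreviation "ptime j \<equiv> p (mach j) j"
abbreviation "\<rho> j \<equiv> dens p w (mach j) j"
abbreviation "\<delta> \<equiv> epsp \<epsilon> / 2"
abbreviation "expiry j \<equiv> a j + (1 + \<delta>) * ptime j"
abbreviation "finished \<equiv> finished_jobs p A mach a S"

sublocale measurable_schedule S
  using run by unfold_locales (simp add: two_threshold_run_def)

lemma \<delta>_pos: "0 < \<delta>" and \<delta>_le_half: "\<delta> \<le> 1/2"
  using eps_pos by (auto simp: epsp_def)

lemma finite_admitted: "finite A"
  using run finite_jobs by (auto simp: two_threshold_run_def intro: finite_subset)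

lemma processing_job:
  assumes "S i t = Some j"
  shows "active j t" "mach j = i" "\<And>k. active k t \<Longrightarrow> mach k = i \<Longrightarrow> \<rho> k \<le> \<rho> j"
proof -
  have "i < m" using assms run unfolding two_threshold_run_def by (metis not_le option.distinct(1))
  then show "active j t" "mach j = i" "\<And>k. active k t \<Longrightarrow> mach k = i \<Longrightarrow> \<rho> k \<le> \<rho> j"
    using assms run unfolding two_threshold_run_def by auto
qed

lemma admission_event:
  "j \<in> A \<Longrightarrow> mach j < m \<and> a j \<in> event_times Jobs r p A mach a S \<and> cons (a j) (mach j) = Some j"
  using run unfolding two_threshold_run_def by blast

lemma idle_iff:
  assumes "i < m"
  shows "S i t = None \<longleftrightarrow> (\<forall>j. \<not> (active j t \<and> mach j = i))"
  using run assms unfolding two_threshold_run_def by blast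

lemma busy_if_active:
  assumes "active j t"
  obtains k where "S (mach j) t = Some k"
proof -
  have "mach j < m" using assms admission_event by (simp add: is_active_def)
  then show ?thesis using idle_iff assms that by blast
qed

lemma admitted_eligible: "j \<in> A \<Longrightarrow> j \<in> Jobs \<and> elig (mach j) j"
  using run admission_event[of j] unfolding two_threshold_run_def candidates_def by blast

lemma ptime_pos: "j \<in> A \<Longrightarrow> ptime j > 0"
  using admitted_eligible admission_event processing_time_pos by blast

lemma weight_pos_admitted: "j \<in> A \<Longrightarrow> w j > 0"
  using admitted_eligible weight_pos by blast

lemma density_pos: "j \<in> A \<Longrightarrow> \<rho> j > 0"
  using ptime_pos weight_pos_admitted by (simp add: dens_def)

lemma weight_eq:
  assumes "j \<in> A"
  shows "w j = \<rho> j * ptime j"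
  using ptime_pos[OF assms] by (simp add: dens_def)

lemma admission_time_inj: "j \<in> A \<Longrightarrow> k \<in> A \<Longrightarrow> mach j = mach k \<Longrightarrow> a j = a k \<Longrightarrow> j = k"
  using admission_event by (metis option.inject)

lemma active_iff:
  "active j t \<longleftrightarrow> j \<in> A \<and> a j \<le> t \<and> work j t < ptime j \<and> (t - a j) - work j t \<le> \<delta> * ptime j"
  by (auto simp: is_active_def remaining_def algebra_simps)

lemma active_admitted: "active j t \<Longrightarrow> j \<in> A \<and> a j \<le> t"
  by (simp add: active_iff)

lemma active_earlier:
  assumes "active j t" "a j \<le> s" "s \<le> t"
  shows "active j s"
  using assms processed_mono[OF assms(3), of "mach j" j "a j"]
    processed_increment_le[OF assms(2,3), of "mach j" j]
  unfolding active_iff by auto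

lemma active_before_expiry: "active j t \<Longrightarrow> t < expiry j"
  by (auto simp: active_iff algebra_simps)

definition rivals :: "'j \<Rightarrow> 'j set" where
  "rivals k = {x. active x (a k) \<and> mach x = mach k \<and> a x < a k}"

lemma admission_rule:
  assumes "y \<in> A" "rivals y \<noteq> {}"
  obtains k where "k \<in> rivals y" "\<And>x. x \<in> rivals y \<Longrightarrow> \<rho> x \<le> \<rho> k"
    "adm_cond \<epsilon> p w (mach y) y k"
proof -
  have "let Act = rivals y in
      if Act = {} then y \<in> A \<and> mach y = mach y \<and> a y = a y
      else \<exists>k\<in>Act. (\<forall>k'\<in>Act. dens p w (mach y) k' \<le> dens p w (mach y) k) \<and>
        ((y \<in> A \<and> mach y = mach y \<and> a y = a y) \<longleftrightarrow> adm_cond \<epsilon> p w (mach y) y k)"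
    using run admission_event[OF assms(1)] unfolding two_threshold_run_def rivals_def by blast
  then obtain k where "k \<in> rivals y" "\<forall>x\<in>rivals y. dens p w (mach y) x \<le> dens p w (mach y) k"
    "adm_cond \<epsilon> p w (mach y) y k"
    using assms by (auto simp: Let_def)
  moreover have "mach x = mach y" if "x \<in> rivals y" for x
    using that by (simp add: rivals_def)
  ultimately show ?thesis using that by metis
qed

lemma active_newer_denser:
  assumes "active x t" "active y t" "mach x = mach y" "a x < a y"
  shows "4 * \<rho> x \<le> \<rho> y"
proof -
  have "y \<in> A" "a y \<le> t" using active_admitted[OF assms(2)] by auto
  then have "x \<in> rivals y" using active_earlier[OF assms(1)] assms(3,4) by (simp add: rivals_def)
  then obtain k where k: "k \<in> rivals y" "\<rho> x \<le> \<rho> k"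
    and adm: "adm_cond \<epsilon> p w (mach y) y k"
    using admission_rule[OF \<open>y \<in> A\<close>] by blast
  have "k \<in> A" "mach k = mach y" using k(1) active_admitted by (auto simp: rivals_def)
  then have "p (mach y) k > 0" using ptime_pos[OF \<open>k \<in> A\<close>] by simp
  then have "4 * dens p w (mach y) k \<le> \<rho> y"
    by (rule adm_cond_density_ge[OF adm eps_pos ptime_pos[OF \<open>y \<in> A\<close>] _
          weight_pos_admitted[OF \<open>k \<in> A\<close>]])
  then show ?thesis using k(2) \<open>mach k = mach y\<close> by simp
qed

lemma active_denser_newer:
  assumes "active x t" "active y t" "mach x = mach y" "x \<noteq> y" "\<rho> x \<le> \<rho> y"
  shows "a x < a y"
proof -
  have A: "x \<in> A" "y \<in> A" using assms(1,2) active_admitted by auto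
  then have "a x \<noteq> a y" using admission_time_inj assms(3,4) by blast
  moreover have "\<not> a y < a x"
    using active_newer_denser[OF assms(2,1)] assms(3,5) density_pos[OF A(2)] by fastforce
  ultimately show ?thesis by simp
qed

definition parent :: "'j \<Rightarrow> 'j \<Rightarrow> bool" where
  "parent j k \<longleftrightarrow> k \<in> A \<and> j \<in> rivals k \<and> (\<forall>x\<in>rivals k. \<rho> x \<le> \<rho> j)"

lemma parent_admitted: "parent j k \<Longrightarrow> j \<in> A \<and> k \<in> A"
  by (auto simp: parent_def rivals_def dest: active_admitted)

lemma parent_earlier: "parent j k \<Longrightarrow> a j < a k"
  by (simp add: parent_def rivals_def)

lemma densest_rival_unique:
  assumes "parent j k" "parent j' k"
  shows "j = j'"
proof (rule ccontr)
  assume "j \<noteq> j'"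
  moreover have "j \<in> rivals k" "j' \<in> rivals k" "\<rho> j = \<rho> j'"
    using assms by (auto simp: parent_def intro: order.antisym)
  ultimately have "a j < a j'" "a j' < a j"
    using active_denser_newer by (auto simp: rivals_def)
  then show False by simp
qed

lemma parent_adm_cond:
  assumes "parent j k"
  shows "adm_cond \<epsilon> p w (mach k) k j"
proof -
  have "k \<in> A" "rivals k \<noteq> {}" using assms by (auto simp: parent_def)
  from admission_rule[OF this] obtain k0
    where "k0 \<in> rivals k" "\<And>x. x \<in> rivals k \<Longrightarrow> \<rho> x \<le> \<rho> k0"
      and adm: "adm_cond \<epsilon> p w (mach k) k k0"
    by blast
  then have "parent k0 k" using \<open>k \<in> A\<close> by (simp add: parent_def)
  then show ?thesis using densest_rival_unique[OF assms] adm by simp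
qed

sublocale forest: ranked_forest parent A a
proof
  show "finite A" by (rule finite_admitted)
qed (simp_all add: parent_admitted parent_earlier densest_rival_unique)

lemma rival_of_parent:
  assumes "x \<in> rivals k" "parent j k" "x \<noteq> j"
  shows "x \<in> rivals j"
proof -
  have "active x (a k)" "active j (a k)" "mach x = mach j" "\<rho> x \<le> \<rho> j"
    using assms(1,2) by (auto simp: parent_def rivals_def)
  then have "a x < a j" using active_denser_newer assms(3) by blast
  then show ?thesis
    using active_earlier[OF \<open>active x (a k)\<close>] parent_earlier[OF assms(2)] \<open>mach x = mach j\<close>
    by (simp add: rivals_def)
qed

lemma rival_descendant: "k \<in> A \<Longrightarrow> x \<in> rivals k \<Longrightarrow> parent\<^sup>+\<^sup>+ x k"
proof (induction k rule: wf_induct_rule[OF wf_finite_rank(1)[OF finite_admitted, of a]])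
  case (1 k)
  obtain j where "j \<in> rivals k" "\<And>x. x \<in> rivals k \<Longrightarrow> \<rho> x \<le> \<rho> j"
    using admission_rule "1.prems" by blast
  then have "parent j k" using "1.prems" by (simp add: parent_def)
  show ?case
  proof (cases "x = j")
    case False
    have "(j, k) \<in> {(x, y). x \<in> A \<and> y \<in> A \<and> a x < a y}"
      using parent_admitted[OF \<open>parent j k\<close>] parent_earlier[OF \<open>parent j k\<close>] by simp
    then have "parent\<^sup>+\<^sup>+ x j"
      using "1.IH" rival_of_parent[OF "1.prems"(2) \<open>parent j k\<close> False]
        parent_admitted[OF \<open>parent j k\<close>] by simp
    then show ?thesis using \<open>parent j k\<close> by (rule tranclp.trancl_into_trancl)
  qed (use \<open>parent j k\<close> in blast)
qed

lemma processing_descendant: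
  assumes "active j t" "S (mach j) t = Some k" "k \<noteq> j"
  shows "parent\<^sup>+\<^sup>+ j k"
proof -
  have k: "active k t" "mach k = mach j" "\<rho> j \<le> \<rho> k"
    using processing_job[OF assms(2)] assms(1) by auto
  then have "a j < a k" using active_denser_newer[OF assms(1) k(1) k(2)[symmetric]] assms(3) by auto
  then have "j \<in> rivals k"
    using active_earlier[OF assms(1)] active_admitted[OF k(1)] k(2) by (simp add: rivals_def)
  then show ?thesis using rival_descendant active_admitted[OF k(1)] by blast
qed

lemma active_machine_busy:
  assumes "active j t"
  obtains k where "k \<in> forest.subtree j" "S (mach j) t = Some k"
proof -
  obtain k where k: "S (mach j) t = Some k" using busy_if_active[OF assms] .
  then have "parent\<^sup>*\<^sup>* j k"
    using processing_descendant[OF assms] by (cases "k = j") (auto intro: tranclp_into_rtranclp)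
  then show ?thesis using that k by (simp add: forest.subtree_def)
qed

lemma work_le_ptime:
  assumes "j \<in> A"
  shows "work j t \<le> ptime j"
proof (rule ccontr)
  assume "\<not> work j t \<le> ptime j"
  then have exceeds: "ptime j < work j t" by simp
  then have "a j \<le> t" using ptime_pos[OF assms] by (cases "a j \<le> t") (auto simp: processed_empty)
  moreover have "continuous_on {a j..t} (work j)"
    by (rule continuous_on_subset[OF continuous_on_processed]) auto
  ultimately obtain u where u: "a j \<le> u" "u \<le> t" "work j u = ptime j"
    using IVT'[of "work j" "a j" "ptime j" t] exceeds ptime_pos[OF assms]
    by (auto simp: processed_empty)
  have "processed S (mach j) j u t = 0"
  proof (rule processed_eq_0)
    fix x assume "u \<le> x" "x < t"
    then have "ptime j \<le> work j x" using processed_mono u(3) by metis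
    then show "S (mach j) x \<noteq> Some j" using processing_job(1) by (force simp: active_iff)
  qed
  then have "work j t = ptime j" using processed_split[OF u(1,2)] u(3) by simp
  then show False using exceeds by simp
qed

lemma unfinished_work_less:
  assumes "j \<in> A" "j \<notin> finished" "a j \<le> t"
  shows "work j t < ptime j"
proof -
  have "remaining p mach a S j t \<noteq> 0" using assms unfolding finished_jobs_def by blast
  then show ?thesis using work_le_ptime[OF assms(1), of t] unfolding remaining_def by simp
qed

text \<open>A job is never processed after its expiry, so this is all the processing it ever receives.\<close>

definition received :: "'j \<Rightarrow> real" where
  "received k = work k (expiry k)"

lemma received_nonneg: "0 \<le> received k"
  by (simp add: received_def processed_nonneg)

lemma received_le_ptime: "k \<in> A \<Longrightarrow> received k \<le> ptime k"
  by (simp add: received_def work_le_ptime)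

definition descendant_work :: "'j \<Rightarrow> real" where
  "descendant_work j = (\<Sum>k\<in>forest.descendants j. received k)"

lemma unfinished_active_window:
  assumes "j \<in> A" "j \<notin> finished"
  shows "\<exists>D \<ge> a j. (D - a j) - work j D = \<delta> * ptime j \<and> (\<forall>x\<in>{a j..<D}. active j x)"
proof -
  let ?idle = "\<lambda>t. (t - a j) - work j t"
  have "continuous_on {a j..expiry j} ?idle"
    by (intro continuous_intros continuous_on_subset[OF continuous_on_processed]) auto
  moreover have "?idle (a j) \<le> \<delta> * ptime j" "\<delta> * ptime j \<le> ?idle (expiry j)"
    using ptime_pos[OF assms(1)] \<delta>_pos work_le_ptime[OF assms(1), of "expiry j"]
    by (auto simp: processed_empty algebra_simps)
  moreover have "a j \<le> expiry j" using ptime_pos[OF assms(1)] \<delta>_pos by simp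
  ultimately obtain D where D: "a j \<le> D" "?idle D = \<delta> * ptime j"
    using IVT'[of ?idle "a j" "\<delta> * ptime j" "expiry j"] by blast
  have "active j x" if "a j \<le> x" "x < D" for x
    using that D assms processed_increment_le[of "a j" x D "mach j" j]
      unfinished_work_less[OF assms that(1)]
    by (simp add: active_iff)
  with D show ?thesis by auto
qed

lemma unfinished_descendants_work:
  assumes "j \<in> A" "j \<notin> finished"
  shows "\<delta> * ptime j \<le> descendant_work j"
proof -
  obtain D where D: "a j \<le> D" "(D - a j) - work j D = \<delta> * ptime j"
    and waiting: "\<forall>x\<in>{a j..<D}. active j x"
    using unfinished_active_window[OF assms] by blast
  let ?slot = "\<lambda>k b. {x. S (mach k) x = Some k} \<inter> {a k..<b}"
  have "{a j..<D} \<subseteq> ?slot j D \<union> (\<Union>k\<in>forest.descendants j. ?slot k (expiry k))"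
  proof
    fix x assume x: "x \<in> {a j..<D}"
    then obtain k where k: "k \<in> forest.subtree j" "S (mach j) x = Some k"
      using waiting active_machine_busy by blast
    then have "active k x" "mach k = mach j" using processing_job by auto
    then have "x \<in> ?slot k (expiry k)"
      using k(2) active_admitted[OF \<open>active k x\<close>] active_before_expiry[OF \<open>active k x\<close>]
      by auto
    then show "x \<in> ?slot j D \<union> (\<Union>k\<in>forest.descendants j. ?slot k (expiry k))"
      using k x forest.subtree_eq by auto
  qed
  then have "D - a j \<le> work j D + (\<Sum>k\<in>forest.descendants j. received k)"
    using length_le_measure_cover[OF D(1) fmeasurable_slots forest.finite_descendants]
      fmeasurable_slots
    by (simp add: processed_def received_def)
  then show ?thesis using D(2) by (simp add: descendant_work_def)
qed

section \<open>Charging along the forest\<close>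

lemma parent_same_machine: "parent j k \<Longrightarrow> mach j = mach k"
  by (simp add: parent_def rivals_def)

lemma parent_density_ge:
  assumes "parent j c"
  shows "4 * \<rho> j \<le> \<rho> c"
proof -
  have "j \<in> A" "c \<in> A" and same: "mach j = mach c"
    using parent_admitted[OF assms] parent_same_machine[OF assms] by auto
  then have "p (mach c) j > 0" using ptime_pos[OF \<open>j \<in> A\<close>] by simp
  then have "4 * dens p w (mach c) j \<le> \<rho> c"
    by (rule adm_cond_density_ge[OF parent_adm_cond[OF assms] eps_pos ptime_pos[OF \<open>c \<in> A\<close>] _
          weight_pos_admitted[OF \<open>j \<in> A\<close>]])
  then show ?thesis using same by simp
qed

lemma parent_dense_or_heavy:
  assumes "parent j c"
  shows "4 / \<delta> * \<rho> j \<le> \<rho> c \<or> 4 * w j \<le> w c"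
proof -
  have "j \<in> A" "c \<in> A" and same: "mach j = mach c"
    using parent_admitted[OF assms] parent_same_machine[OF assms] by auto
  then have "p (mach c) j > 0" using ptime_pos[OF \<open>j \<in> A\<close>] by simp
  then have "8 / epsp \<epsilon> * dens p w (mach c) j \<le> \<rho> c \<or> 4 * w j \<le> w c"
    by (rule adm_cond_dense_or_heavy[OF parent_adm_cond[OF assms] eps_pos ptime_pos[OF \<open>c \<in> A\<close>] _
          weight_pos_admitted[OF \<open>j \<in> A\<close>]])
  moreover have "4 / \<delta> = 8 / epsp \<epsilon>" by simp
  ultimately show ?thesis using same by simp
qed

definition signed_weight :: "'j \<Rightarrow> real" where
  "signed_weight k = (if k \<in> finished then w k else - w k)"

definition balance :: "'j \<Rightarrow> real" where
  "balance j = (\<Sum>k\<in>forest.subtree j. signed_weight k)"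

lemma balance_rec: "balance j = signed_weight j + (\<Sum>c\<in>forest.children j. balance c)"
  unfolding balance_def by (simp only: forest.sum_subtree[of _ j] forest.sum_descendants)

lemma descendant_work_rec:
  "descendant_work j = (\<Sum>c\<in>forest.children j. received c + descendant_work c)"
  unfolding descendant_work_def by (simp only: forest.sum_descendants[of _ j] forest.sum_subtree)

lemma descendant_work_nonneg: "0 \<le> descendant_work j"
  unfolding descendant_work_def by (simp add: sum_nonneg received_nonneg)

lemma child_charge_le:
  assumes "parent j c" and charged: "\<rho> c * (ptime c + descendant_work c) \<le> balance c"
  shows "\<rho> j * (received c + descendant_work c) \<le> balance c"
proof -
  have "j \<in> A" "c \<in> A" using parent_admitted[OF assms(1)] by auto
  then have "\<rho> j \<le> \<rho> c" using parent_density_ge[OF assms(1)] density_pos by force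
  moreover have "received c + descendant_work c \<le> ptime c + descendant_work c"
    using received_le_ptime[OF \<open>c \<in> A\<close>] by simp
  ultimately have "\<rho> j * (received c + descendant_work c) \<le> \<rho> c * (ptime c + descendant_work c)"
    using density_pos[OF \<open>j \<in> A\<close>] received_nonneg descendant_work_nonneg
    by (intro mult_mono) (auto intro: add_nonneg_nonneg)
  then show ?thesis using charged by simp
qed

lemma heavy_child_charge_le:
  assumes "parent j c" "4 * w j \<le> w c"
    and charged: "\<rho> c * (ptime c + descendant_work c) \<le> balance c"
  shows "2 * w j + \<rho> j * (received c + descendant_work c) \<le> balance c"
proof -
  have "j \<in> A" "c \<in> A" using parent_admitted[OF assms(1)] by auto
  have dens: "4 * \<rho> j \<le> \<rho> c" by (rule parent_density_ge[OF assms(1)])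
  have "\<rho> j * received c \<le> \<rho> j * ptime c"
    using received_le_ptime[OF \<open>c \<in> A\<close>] density_pos[OF \<open>j \<in> A\<close>] by simp
  also have "\<dots> \<le> \<rho> c / 4 * ptime c"
    using dens ptime_pos[OF \<open>c \<in> A\<close>] by (intro mult_right_mono) auto
  finally have "\<rho> j * received c \<le> w c / 4" using weight_eq[OF \<open>c \<in> A\<close>] by simp
  moreover have "\<rho> j * descendant_work c \<le> \<rho> c * descendant_work c"
    using dens density_pos[OF \<open>j \<in> A\<close>] descendant_work_nonneg by (intro mult_right_mono) auto
  moreover have "w c + \<rho> c * descendant_work c \<le> balance c"
    using charged weight_eq[OF \<open>c \<in> A\<close>] by (simp add: algebra_simps)
  ultimately show ?thesis using assms(2) weight_pos_admitted[OF \<open>j \<in> A\<close>] by (simp add: algebra_simps)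
qed

lemma dense_child_charge_le:
  assumes "parent j c" "4 / \<delta> * \<rho> j \<le> \<rho> c"
    and charged: "\<rho> c * (ptime c + descendant_work c) \<le> balance c"
  shows "4 / \<delta> * (\<rho> j * (received c + descendant_work c)) \<le> balance c"
proof -
  have "j \<in> A" "c \<in> A" using parent_admitted[OF assms(1)] by auto
  have "4 / \<delta> * \<rho> j * (received c + descendant_work c) \<le> \<rho> c * (ptime c + descendant_work c)"
  proof (rule mult_mono)
    show "0 \<le> \<rho> c" using density_pos[OF \<open>c \<in> A\<close>] by simp
    show "0 \<le> received c + descendant_work c"
      using received_nonneg[of c] descendant_work_nonneg[of c] by simp
  qed (use assms(2) received_le_ptime[OF \<open>c \<in> A\<close>] in simp_all)
  then show ?thesis using charged by (simp add: mult.assoc)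
qed

lemma children_balance_ge:
  assumes "\<And>c. parent j c \<Longrightarrow> \<rho> c * (ptime c + descendant_work c) \<le> balance c"
  shows "\<rho> j * descendant_work j \<le> (\<Sum>c\<in>forest.children j. balance c)"
proof -
  have "\<rho> j * descendant_work j = (\<Sum>c\<in>forest.children j. \<rho> j * (received c + descendant_work c))"
    by (simp only: descendant_work_rec[of j] sum_distrib_left)
  also have "\<dots> \<le> (\<Sum>c\<in>forest.children j. balance c)"
  proof (rule sum_mono)
    fix c assume "c \<in> forest.children j"
    then have "parent j c" by (simp add: forest.children_def)
    then show "\<rho> j * (received c + descendant_work c) \<le> balance c"
      using child_charge_le assms by blast
  qed
  finally show ?thesis .
qed

lemma unfinished_weight_le_descendant_work:
  assumes "j \<in> A" "j \<notin> finished"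
  shows "2 * w j \<le> (4 / \<delta> - 1) * (\<rho> j * descendant_work j)"
proof -
  have "\<delta> * ptime j \<le> descendant_work j"
    by (rule unfinished_descendants_work[OF assms])
  then have "(4 / \<delta> - 1) * (\<rho> j * (\<delta> * ptime j)) \<le> (4 / \<delta> - 1) * (\<rho> j * descendant_work j)"
    using \<delta>_pos \<delta>_le_half density_pos[OF assms(1)] by (intro mult_left_mono) auto
  moreover have "(4 / \<delta> - 1) * (\<rho> j * (\<delta> * ptime j)) = (4 - \<delta>) * w j"
    using \<delta>_pos weight_eq[OF assms(1)] by (simp add: field_simps)
  moreover have "2 * w j \<le> (4 - \<delta>) * w j"
    using \<delta>_le_half weight_pos_admitted[OF assms(1)] by simp
  ultimately show ?thesis by linarith
qed

lemma unfinished_children_balance_ge: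
  assumes "j \<in> A" "j \<notin> finished"
    and charged: "\<And>c. parent j c \<Longrightarrow> \<rho> c * (ptime c + descendant_work c) \<le> balance c"
  shows "2 * w j + \<rho> j * descendant_work j \<le> (\<Sum>c\<in>forest.children j. balance c)"
proof -
  let ?charge = "\<lambda>c. \<rho> j * (received c + descendant_work c)"
  have split: "\<rho> j * descendant_work j = (\<Sum>c\<in>forest.children j. ?charge c)"
    by (simp only: descendant_work_rec[of j] sum_distrib_left)
  show ?thesis
  proof (cases "\<exists>c\<in>forest.children j. 4 * w j \<le> w c")
    case True
    then obtain c0 where c0: "parent j c0" "4 * w j \<le> w c0" by (auto simp: forest.children_def)
    let ?others = "forest.children j - {c0}"
    have c0_in: "c0 \<in> forest.children j" using c0(1) by (simp add: forest.children_def)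
    have "2 * w j + \<rho> j * descendant_work j = 2 * w j + ?charge c0 + (\<Sum>c\<in>?others. ?charge c)"
      unfolding split using sum.remove[OF forest.finite_children c0_in] by simp
    also have "\<dots> \<le> balance c0 + (\<Sum>c\<in>?others. balance c)"
    proof (intro add_mono sum_mono)
      show "2 * w j + ?charge c0 \<le> balance c0"
        by (rule heavy_child_charge_le[OF c0 charged[OF c0(1)]])
      fix c assume "c \<in> ?others"
      then have "parent j c" by (simp add: forest.children_def)
      then show "?charge c \<le> balance c" using child_charge_le charged by blast
    qed
    also have "\<dots> = (\<Sum>c\<in>forest.children j. balance c)"
      by (rule sum.remove[OF forest.finite_children c0_in, symmetric])
    finally show ?thesis .
  next
    case False
    then have dense: "4 / \<delta> * \<rho> j \<le> \<rho> c" if "parent j c" for c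
      using parent_dense_or_heavy[OF that] that by (auto simp: forest.children_def)
    have "2 * w j \<le> (4 / \<delta> - 1) * (\<rho> j * descendant_work j)"
      by (rule unfinished_weight_le_descendant_work[OF assms(1,2)])
    moreover have "4 / \<delta> * (\<rho> j * descendant_work j) \<le> (\<Sum>c\<in>forest.children j. balance c)"
      unfolding split sum_distrib_left
    proof (rule sum_mono)
      fix c assume "c \<in> forest.children j"
      then have "parent j c" by (simp add: forest.children_def)
      then show "4 / \<delta> * ?charge c \<le> balance c"
        using dense_child_charge_le dense charged by blast
    qed
    ultimately show ?thesis by (simp add: left_diff_distrib)
  qed
qed

lemma balance_ge:
  "j \<in> A \<Longrightarrow> \<rho> j * (ptime j + descendant_work j) \<le> balance j"
proof (induction j rule: forest.children_induct)
  case (children j)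
  have charged: "\<rho> c * (ptime c + descendant_work c) \<le> balance c" if "parent j c" for c
    using children.IH[OF that] parent_admitted[OF that] by blast
  have weight: "w j = \<rho> j * ptime j" by (rule weight_eq[OF children.prems])
  show ?case
  proof (cases "j \<in> finished")
    case True
    then show ?thesis
      using balance_rec[of j] children_balance_ge[OF charged] weight
      by (simp add: signed_weight_def algebra_simps)
  next
    case False
    then show ?thesis
      using balance_rec[of j] unfinished_children_balance_ge[OF children.prems False charged] weight
      by (simp add: signed_weight_def algebra_simps)
  qed
qed

lemma finished_weight_ge: "(\<Sum>j\<in>finished. w j) \<ge> 1/2 * (\<Sum>j\<in>A. w j)"
proof -
  have "0 \<le> balance q" if "q \<in> forest.roots" for q
  proof -
    have "q \<in> A" using that by (simp add: forest.roots_def)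
    then have "0 \<le> \<rho> q * (ptime q + descendant_work q)"
      using density_pos ptime_pos descendant_work_nonneg by (simp add: add_nonneg_nonneg less_imp_le)
    then show ?thesis using balance_ge[OF \<open>q \<in> A\<close>] by linarith
  qed
  then have "0 \<le> (\<Sum>k\<in>A. signed_weight k)"
    unfolding forest.sum_nodes_roots[of signed_weight] balance_def[symmetric]
    by (rule sum_nonneg)
  moreover have "finished \<subseteq> A" by (auto simp: finished_jobs_def)
  then have "(\<Sum>k\<in>A. signed_weight k) =
      (\<Sum>k\<in>A - finished. signed_weight k) + (\<Sum>k\<in>finished. signed_weight k)"
    and "(\<Sum>k\<in>A. w k) = (\<Sum>k\<in>A - finished. w k) + (\<Sum>k\<in>finished. w k)"
    using sum.subset_diff[OF _ finite_admitted] by blast+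
  moreover have "(\<Sum>k\<in>A - finished. signed_weight k) = - (\<Sum>k\<in>A - finished. w k)"
    by (simp add: signed_weight_def sum_negf)
  moreover have "(\<Sum>k\<in>finished. signed_weight k) = (\<Sum>k\<in>finished. w k)"
    by (simp add: signed_weight_def)
  ultimately show ?thesis by linarith
qed

end

theorem theorem3:
  fixes \<epsilon> :: real and m :: nat and Jobs :: "'j set"
    and elig :: "nat \<Rightarrow> 'j \<Rightarrow> bool" and p :: "nat \<Rightarrow> 'j \<Rightarrow> real"
    and w r d :: "'j \<Rightarrow> real"
    and A :: "'j set" and mach :: "'j \<Rightarrow> nat" and a :: "'j \<Rightarrow> real"
    and S :: "nat \<Rightarrow> real \<Rightarrow> 'j option" and cons :: "real \<Rightarrow> nat \<Rightarrow> 'j option"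
  assumes eps_pos: "\<epsilon> > 0"
    and fin: "finite Jobs"
    and w_pos: "\<And>j. j \<in> Jobs \<Longrightarrow> w j > 0"
    and p_pos: "\<And>i j. i < m \<Longrightarrow> j \<in> Jobs \<Longrightarrow> elig i j \<Longrightarrow> p i j > 0"
    and slack: "\<And>i j. i < m \<Longrightarrow> j \<in> Jobs \<Longrightarrow> elig i j \<Longrightarrow> d j - r j \<ge> (1 + \<epsilon>) * p i j"
    and run: "two_threshold_run \<epsilon> m Jobs elig p w r d A mach a S cons"
  shows "(\<Sum>j\<in>finished_jobs p A mach a S. w j) \<ge> 1/2 * (\<Sum>j\<in>A. w j)"
proof -
  interpret two_threshold \<epsilon> m Jobs elig p w r d A mach a S cons
    using eps_pos fin w_pos p_pos run by unfold_locales
  show ?thesis by (rule finished_weight_ge)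
qed

end
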